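(* Let $\mathfrak{T}$ be a triangulation of the strip and $t=\Phi(\mathfrak{T})$. For $j\in\mathbb{Z}$ let $\gamma_j$ be the number of triangles of $\mathfrak{T}$ incident with the vertex $j^\circ$, i.e. $\gamma_j=1+\#\{\text{arcs of }\mathfrak{T}\text{ with endpoint } j^\circ\}$. Then for all $j,a\in\mathbb{Z}$, $t_{j-1,a}+t_{j+1,a}=\gamma_j\,t_{ja}$, and moreover $\gamma_j=c_{j-1,j+1}$.
   Context: Vertices of the strip: two disjoint copies of $\mathbb{Z}$, written $\mathbb{Z}^\circ=\{p^\circ: p\in\mathbb{Z}\}$ (upper edge) and $\mathbb{Z}_\circ=\{q_\circ : q\in\mathbb{Z}\}$ (lower edge); $p^\circ$ is the point $(-p,1)$ and $q_\circ$ the point $(q,-1)$ of $\mathbb{R}\times[-1,1]$. A connecting arc is a pair $(p^\circ,q_\circ)$; an internal arc is a pair $(p^\circ,q^\circ)$ or $(p_\circ,q_\circ)$ with $p\le q-2$. Two distinct arcs cross exactly in the following cases: connecting arcs $(p^\circ,q_\circ),(p'^\circ,q'_\circ)$ cross iff $(p-p')(q-q')>0$; internal arcs $(a^\circ,b^\circ),(c^\circ,d^\circ)$ cross iff $a<c<b<d$ or $c<a<d<b$ (same for lower internal arcs); $(a^\circ,b^\circ)$ crosses $(p^\circ,q_\circ)$ iff $a<p<b$; $(a_\circ,b_\circ)$ crosses $(p^\circ,q_\circ)$ iff $a<q<b$; upper and lower internal arcs never cross. A triangulation of the strip is a maximal set $\mathfrak{T}$ of pairwise non-crossing arcs such that for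 every $(i,j)\in\mathbb{Z}^2$ there are $(p^\circ,q_\circ),(p'^\circ,q'_\circ)\in\mathfrak{T}$ with $p<i,\ q>j$ and $p'>i,\ q'<j$. Friese numbers: for a convex polygon with vertices $v_0,\dots,v_n$ in cyclic order and triangulation $\mathcal{X}$, with $a_l$ the number of triangles at $v_l$, set $\mathcal{X}(v_k,v_l)=m_k(l)$ where $m_k(k)=0$, $m_k(k+1)=1$, $m_k(l+1)=a_lm_k(l)-m_k(l-1)$ (indices mod $n+1$). $\Phi(\mathfrak{T})_{ij}$: choose $(p^\circ,q_\circ),(r^\circ,s_\circ)\in\mathfrak{T}$ with $p<i<r$, $s<j<q$, let $P$ be the polygon with vertices in cyclic order $p^\circ,\dots,r^\circ,s_\circ,\dots,q_\circ$, $\mathfrak{T}_P$ the triangulation of $P$ by the arcs of $\mathfrak{T}$ that are diagonals of $P$, and set $\Phi(\mathfrak{T})_{ij}=\mathfrak{T}_P(i^\circ,j_\circ)$. For an $\mathrm{SL}_2$-tiling $t$ and $i<j$, $c_{ij}=t_{ia}t_{j,a+1}-t_{i,a+1}t_{ja}$ for any integer $a$ (independent of $a$). *)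

theory Defs
  imports Main
begin

text \<open>Up p is the upper vertex p-circle at (-p,1); Lo q is the lower vertex q-circle at (q,-1).\<close>
datatype vert = Up int | Lo int

datatype arc = Conn int int | UpA int int | LoA int int

fun valid_arc :: "arc \<Rightarrow> bool" where
  "valid_arc (Conn p q) = True"
| "valid_arc (UpA a b) = (a \<le> b - 2)"
| "valid_arc (LoA a b) = (a \<le> b - 2)"

fun ends :: "arc \<Rightarrow> vert set" where
  "ends (Conn p q) = {Up p, Lo q}"
| "ends (UpA a b) = {Up a, Up b}"
| "ends (LoA a b) = {Lo a, Lo b}"

fun cross :: "arc \<Rightarrow> arc \<Rightarrow> bool" where
  "cross (Conn p q) (Conn p' q') = ((p - p') * (q - q') > 0)"
| "cross (UpA a b) (UpA c d) = (a < c \<and> c < b \<and> b < d \<or> c < a \<and> a < d \<and> d < b)"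
| "cross (LoA a b) (LoA c d) = (a < c \<and> c < b \<and> b < d \<or> c < a \<and> a < d \<and> d < b)"
| "cross (UpA a b) (Conn p q) = (a < p \<and> p < b)"
| "cross (Conn p q) (UpA a b) = (a < p \<and> p < b)"
| "cross (LoA a b) (Conn p q) = (a < q \<and> q < b)"
| "cross (Conn p q) (LoA a b) = (a < q \<and> q < b)"
| "cross (UpA a b) (LoA c d) = False"
| "cross (LoA a b) (UpA c d) = False"

definition triangulation :: "arc set \<Rightarrow> bool" where
  "triangulation T \<longleftrightarrow>
     (\<forall>\<alpha>\<in>T. valid_arc \<alpha>) \<and>
     (\<forall>\<alpha>\<in>T. \<forall>\<beta>\<in>T. \<alpha> \<noteq> \<beta> \<longrightarrow> \<not> cross \<alpha> \<beta>) \<and>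
     (\<forall>\<alpha>. valid_arc \<alpha> \<and> \<alpha> \<notin> T \<longrightarrow> (\<exists>\<beta>\<in>T. \<alpha> \<noteq> \<beta> \<and> cross \<alpha> \<beta>)) \<and>
     (\<forall>i j. (\<exists>p q. Conn p q \<in> T \<and> p < i \<and> q > j) \<and>
            (\<exists>p' q'. Conn p' q' \<in> T \<and> p' > i \<and> q' < j))"

text \<open>A polygon is given by the list vs of its vertices v_0,...,v_n in cyclic order;
  a triangulation by its set D of diagonals (2-element vertex sets).\<close>

definition poly_edges :: "'v list \<Rightarrow> 'v set set" where
  "poly_edges vs = {{vs ! i, vs ! ((i + 1) mod length vs)} | i. i < length vs}"

definition poly_triangles :: "'v list \<Rightarrow> 'v set set \<Rightarrow> 'v set set" where
  "poly_triangles vs D = {S. S \<subseteq> set vs \<and> card S = 3 \<and>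
      (\<forall>x\<in>S. \<forall>y\<in>S. x \<noteq> y \<longrightarrow> {x, y} \<in> poly_edges vs \<union> D)}"

definition tri_at :: "'v list \<Rightarrow> 'v set set \<Rightarrow> nat \<Rightarrow> int" where
  "tri_at vs D l = int (card {S \<in> poly_triangles vs D. vs ! l \<in> S})"

text \<open>mseq a N k d = m_k(k+d), with m_k(k)=0, m_k(k+1)=1,
  m_k(l+1) = a_l m_k(l) - m_k(l-1), indices mod N = n+1.\<close>
fun mseq :: "(nat \<Rightarrow> int) \<Rightarrow> nat \<Rightarrow> nat \<Rightarrow> nat \<Rightarrow> int" where
  "mseq a N k 0 = 0"
| "mseq a N k (Suc 0) = 1"
| "mseq a N k (Suc (Suc d)) = a ((k + d + 1) mod N) * mseq a N k (Suc d) - mseq a N k d"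

definition vidx :: "'v list \<Rightarrow> 'v \<Rightarrow> nat" where
  "vidx vs x = (THE k. k < length vs \<and> vs ! k = x)"

definition friese :: "'v list \<Rightarrow> 'v set set \<Rightarrow> 'v \<Rightarrow> 'v \<Rightarrow> int" where
  "friese vs D x y =
     (let N = length vs; k = vidx vs x; l = vidx vs y
      in mseq (tri_at vs D) N k ((l + N - k) mod N))"

definition strip_poly :: "int \<Rightarrow> int \<Rightarrow> int \<Rightarrow> int \<Rightarrow> vert list" where
  "strip_poly p r s q = map Up [p..r] @ map Lo [s..q]"

definition poly_diags :: "arc set \<Rightarrow> vert list \<Rightarrow> vert set set" where
  "poly_diags T vs = {ends \<alpha> | \<alpha>. \<alpha> \<in> T \<and> ends \<alpha> \<subseteq> set vs} - poly_edges vs"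

definition Phi :: "arc set \<Rightarrow> int \<Rightarrow> int \<Rightarrow> int" where
  "Phi T i j = (SOME v. \<exists>p q r s. Conn p q \<in> T \<and> Conn r s \<in> T \<and>
       p < i \<and> i < r \<and> s < j \<and> j < q \<and>
       v = friese (strip_poly p r s q) (poly_diags T (strip_poly p r s q)) (Up i) (Lo j))"

definition gamma :: "arc set \<Rightarrow> int \<Rightarrow> int" where
  "gamma T j = 1 + int (card {\<alpha> \<in> T. Up j \<in> ends \<alpha>})"

end

theory Submission
  imports Defs
begin

text \<open>The entry of \<Phi>(T) at (i, a) is a Friese number of a polygon P cut out of the strip by
  two connecting arcs of T. Cutting P along its arcs down to triangles shows that the triangle
  counts c(v) of P form a quiddity cycle: the product of the matrices [[c(v), -1], [1, 0]]
  around P is -1 (Conway and Coxeter), and c(v) is one less than the number of neighbours of v.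
  Hence every entry is a continuant, the top-left entry of the product of these matrices along
  the boundary path from i to a, and gluing shows that it does not depend on the choice of P.
  For an upper vertex j inside P, c(j) = \<gamma>(j); the first relation is the three-term
  recurrence of continuants and the second is the determinant-one property of the product.\<close>

section \<open>Quiddity matrices\<close>

datatype mat2 = Mat2 int int int int

instantiation mat2 :: "{monoid_mult, uminus}"
begin

fun times_mat2 :: "mat2 \<Rightarrow> mat2 \<Rightarrow> mat2" where
  "Mat2 a b c d * Mat2 e f g h = Mat2 (a*e + b*g) (a*f + b*h) (c*e + d*g) (c*f + d*h)"

definition one_mat2 :: mat2 where
  "1 = Mat2 1 0 0 1"

fun uminus_mat2 :: "mat2 \<Rightarrow> mat2" where
  "- Mat2 a b c d = Mat2 (-a) (-b) (-c) (-d)"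

instance
proof
  fix X Y Z :: mat2
  show "X * Y * Z = X * (Y * Z)"
    by (cases X; cases Y; cases Z) (simp add: algebra_simps)
  show "1 * X = X" "X * 1 = X"
    by (cases X; simp add: one_mat2_def)+
qed

end

lemma mat2_minus_mult [simp]: "- X * Y = - (X * Y)" "X * - Y = - (X * Y)" for X Y :: mat2
  by (cases X; cases Y; simp)+

lemma mat2_minus_minus [simp]: "- (- X) = X" for X :: mat2
  by (cases X) simp

fun mat2_11 :: "mat2 \<Rightarrow> int" where
  "mat2_11 (Mat2 a b c d) = a"

fun mat2_det :: "mat2 \<Rightarrow> int" where
  "mat2_det (Mat2 a b c d) = a * d - b * c"

lemma mat2_det_mult: "mat2_det (X * Y) = mat2_det X * mat2_det Y"
  by (cases X; cases Y) (simp add: algebra_simps)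

definition quid :: "int \<Rightarrow> mat2" where
  "quid c = Mat2 c (-1) 1 0"

text \<open>The factors are multiplied in reverse order, so that the top-left entry is the
  continuant computed by the recurrence of mseq.\<close>
definition quid_prod :: "int list \<Rightarrow> mat2" where
  "quid_prod cs = prod_list (map quid (rev cs))"

lemma quid_prod_Nil [simp]: "quid_prod [] = 1"
  and quid_prod_Cons [simp]: "quid_prod (c # cs) = quid_prod cs * quid c"
  by (simp_all add: quid_prod_def)

lemma quid_prod_append: "quid_prod (cs @ ds) = quid_prod ds * quid_prod cs"
  by (simp add: quid_prod_def)

lemma mat2_det_quid_prod: "mat2_det (quid_prod cs) = 1"
  by (induction cs) (simp_all add: mat2_det_mult one_mat2_def quid_def)

lemma quid_add: "quid (a + b) = - (quid a * quid 0 * quid b)"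
  by (simp add: quid_def algebra_simps)

lemma quid_zero_twice: "quid 0 * (quid 0 * X) = - X"
  by (simp add: quid_def one_mat2_def flip: mult.assoc) (cases X, simp)

lemma continuant_recurrence: "mat2_11 (X * quid b * quid c) + mat2_11 X = c * mat2_11 (X * quid b)"
  by (cases X) (simp add: quid_def algebra_simps)

lemma continuant_exchange:
  assumes "mat2_det X = 1"
  shows "mat2_11 (X * quid b * quid c) * mat2_11 (quid d * X)
    - mat2_11 (quid d * X * quid b * quid c) * mat2_11 X = c"
proof (cases X)
  case (Mat2 e f g h)
  then have "mat2_11 (X * quid b * quid c) * mat2_11 (quid d * X)
      - mat2_11 (quid d * X * quid b * quid c) * mat2_11 X = c * (e * h - f * g)"
    by (simp add: quid_def algebra_simps)
  then show ?thesis using assms Mat2 by simp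
qed

lemma quid_prod_map_upto_Cons: "i \<le> r \<Longrightarrow> quid_prod (map f [i..r]) = quid_prod (map f [i+1..r]) * quid (f i)"
  by (simp add: upto_rec1)

lemma quid_prod_map_upto_snoc: "s \<le> a \<Longrightarrow> quid_prod (map f [s..a]) = quid (f a) * quid_prod (map f [s..a-1])"
  by (simp add: upto_rec2 quid_prod_append)

text \<open>Gluing a closed quiddity cycle x, B, y onto the edge x y of another cycle: the entries
  at x and y add up, and since quid (a + b) = - quid a * quid 0 * quid b, the product of the
  glued sequence collapses to that of the original one.\<close>
lemma quid_prod_glue:
  assumes closed: "quid_prod (map g (x # B @ [y])) = - 1"
    and "\<forall>v\<in>set S1. f' v = f v" "\<forall>v\<in>set S2. f' v = f v" "\<forall>v\<in>set B. f' v = g v"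
    and "f' x = f x + g x" "f' y = f y + g y"
  shows "quid_prod (map f' (S1 @ x # B @ y # S2)) = quid_prod (map f (S1 @ x # y # S2))"
proof -
  let ?X = "quid_prod (map g B)"
  have maps: "map f' S1 = map f S1" "map f' S2 = map f S2" "map f' B = map g B"
    using assms(2-4) by auto
  have "quid_prod (map f' (S1 @ x # B @ y # S2)) =
      quid_prod (map f S2) * (quid (f y + g y) * ?X * quid (f x + g x)) * quid_prod (map f S1)"
    using assms(5,6) by (simp add: maps quid_prod_append mult.assoc)
  also have "quid (f y + g y) * ?X * quid (f x + g x)
      = quid (f y) * quid 0 * (quid (g y) * ?X * quid (g x)) * quid 0 * quid (f x)"
    by (simp add: quid_add[of "f y"] quid_add[of "g x" "f x", unfolded add.commute[of "g x"]]
        mult.assoc)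
  also have "quid (g y) * ?X * quid (g x) = - 1"
    using closed by (simp add: quid_prod_append mult.assoc)
  also have "quid (f y) * quid 0 * - 1 * quid 0 * quid (f x) = quid (f y) * quid (f x)"
    by (simp add: mult.assoc quid_zero_twice)
  finally show ?thesis
    by (simp add: quid_prod_append mult.assoc)
qed

section \<open>Polygons with chords\<close>

fun path_edges :: "'v list \<Rightarrow> 'v set set" where
  "path_edges (x # y # zs) = insert {x, y} (path_edges (y # zs))"
| "path_edges _ = {}"

lemma path_edges_append: "path_edges (xs @ y # ys) = path_edges (xs @ [y]) \<union> path_edges (y # ys)"
  by (induction xs rule: path_edges.induct) auto

lemma path_edges_subset: "e \<in> path_edges xs \<Longrightarrow> e \<subseteq> set xs"
  by (induction xs rule: path_edges.induct) auto

lemma path_edges_conv_nth: "path_edges xs = {{xs ! i, xs ! Suc i} | i. Suc i < length xs}"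
proof (induction xs rule: path_edges.induct)
  case (1 x y zs)
  have "{{(x # y # zs) ! i, (x # y # zs) ! Suc i} | i. Suc i < length (x # y # zs)}
     = insert {x, y} {{(y # zs) ! i, (y # zs) ! Suc i} | i. Suc i < length (y # zs)}"
  proof (rule set_eqI, rule iffI)
    fix e assume "e \<in> {{(x # y # zs) ! i, (x # y # zs) ! Suc i} | i. Suc i < length (x # y # zs)}"
    then obtain i where "Suc i < length (x # y # zs)" "e = {(x # y # zs) ! i, (x # y # zs) ! Suc i}"
      by blast
    then show "e \<in> insert {x, y} {{(y # zs) ! i, (y # zs) ! Suc i} | i. Suc i < length (y # zs)}"
      by (cases i) auto
  next
    fix e assume "e \<in> insert {x, y} {{(y # zs) ! i, (y # zs) ! Suc i} | i. Suc i < length (y # zs)}"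
    then show "e \<in> {{(x # y # zs) ! i, (x # y # zs) ! Suc i} | i. Suc i < length (x # y # zs)}"
      by (auto intro: exI[of _ 0] exI[of _ "Suc _"])
  qed
  then show ?case using 1 by simp
qed auto

lemma poly_edges_eq_path_edges:
  assumes "vs \<noteq> []"
  shows "poly_edges vs = insert {last vs, hd vs} (path_edges vs)"
proof -
  have "{vs ! i, vs ! ((i + 1) mod length vs)} \<in> insert {last vs, hd vs} (path_edges vs)"
    if "i < length vs" for i
  proof (cases "Suc i < length vs")
    case False
    then have "Suc i = length vs" using that by simp
    then have "i = length vs - 1" "(i + 1) mod length vs = 0" by auto
    then show ?thesis using assms by (simp add: last_conv_nth hd_conv_nth)
  qed (auto simp: path_edges_conv_nth)
  moreover have "{last vs, hd vs} \<in> poly_edges vs"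
    using assms unfolding poly_edges_def
    by (intro CollectI exI[of _ "length vs - 1"]) (auto simp: last_conv_nth hd_conv_nth)
  moreover have "e \<in> poly_edges vs" if e: "e \<in> path_edges vs" for e
  proof -
    obtain i where "Suc i < length vs" "e = {vs ! i, vs ! Suc i}"
      using e unfolding path_edges_conv_nth by blast
    then show ?thesis unfolding poly_edges_def by (intro CollectI exI[of _ i]) simp
  qed
  ultimately show ?thesis unfolding poly_edges_def by blast
qed

lemma poly_edges_subset: "e \<in> poly_edges vs \<Longrightarrow> e \<subseteq> set vs"
  by (cases "vs = []") (auto simp: poly_edges_def poly_edges_eq_path_edges dest: path_edges_subset)

lemma consecutive_in_poly_edges: "{x, y} \<in> poly_edges (A @ x # y # C)"
  by (simp add: poly_edges_eq_path_edges path_edges_append[of A x "y # C"])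

lemma poly_edges_middle:
  assumes dist: "distinct (X @ u # z # w # Y)"
  shows "{z, t} \<in> poly_edges (X @ u # z # w # Y) \<longleftrightarrow> t = u \<or> t = w"
proof -
  let ?vs = "X @ u # z # w # Y"
  have edges: "poly_edges ?vs
      = path_edges (X @ [u]) \<union> {{u, z}, {z, w}} \<union> path_edges (w # Y) \<union> {{last ?vs, hd ?vs}}"
    using poly_edges_eq_path_edges[of ?vs] path_edges_append[of X u "z # w # Y"] by auto
  have "z \<notin> set (X @ [u])" "z \<notin> set (w # Y)" "last ?vs \<noteq> z" "hd ?vs \<noteq> z"
    using dist by (auto simp: hd_append last_append split: list.split)
  then show ?thesis
    unfolding edges by (auto simp: doubleton_eq_iff dest: path_edges_subset)
qed

definition poly_adj :: "'v set set \<Rightarrow> 'v list \<Rightarrow> 'v set set" where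
  "poly_adj E vs = poly_edges vs \<union> E"

definition poly_tris :: "'v set set \<Rightarrow> 'v list \<Rightarrow> 'v set set" where
  "poly_tris E vs = {S. S \<subseteq> set vs \<and> card S = 3 \<and>
      (\<forall>x\<in>S. \<forall>y\<in>S. x \<noteq> y \<longrightarrow> {x, y} \<in> poly_adj E vs)}"

definition tri_count :: "'v set set \<Rightarrow> 'v list \<Rightarrow> 'v \<Rightarrow> int" where
  "tri_count E vs v = int (card {S \<in> poly_tris E vs. v \<in> S})"

definition poly_nbrs :: "'v set set \<Rightarrow> 'v list \<Rightarrow> 'v \<Rightarrow> 'v set" where
  "poly_nbrs E vs v = {w \<in> set vs. w \<noteq> v \<and> {v, w} \<in> poly_adj E vs}"

text \<open>The invariant carried through the decomposition of a triangulated polygon: the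
  quiddity relation of Conway and Coxeter, together with the count of triangles at a vertex by
  its neighbours, which in the end identifies the triangle count with \<gamma>.\<close>
definition conway_coxeter :: "'v set set \<Rightarrow> 'v list \<Rightarrow> bool" where
  "conway_coxeter E vs \<longleftrightarrow> quid_prod (map (tri_count E vs) vs) = - 1 \<and>
     (\<forall>v\<in>set vs. tri_count E vs v = int (card (poly_nbrs E vs v)) - 1)"

lemma conway_coxeter_quid_prod:
  "conway_coxeter E vs \<Longrightarrow> quid_prod (map (tri_count E vs) vs) = - 1"
  by (simp add: conway_coxeter_def)

lemma conway_coxeter_tri_count:
  "conway_coxeter E vs \<Longrightarrow> v \<in> set vs \<Longrightarrow> tri_count E vs v = int (card (poly_nbrs E vs v)) - 1"
  by (simp add: conway_coxeter_def)

lemma finite_poly_tris: "finite (poly_tris E vs)"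
  by (rule finite_subset[of _ "Pow (set vs)"]) (auto simp: poly_tris_def)

lemma tri_count_outside: "v \<notin> set vs \<Longrightarrow> tri_count E vs v = 0"
  unfolding tri_count_def poly_tris_def by auto

text \<open>Digons, with quiddity cycle 0, 0, let a side of a polygon be treated like a chord.\<close>
lemma conway_coxeter_digon:
  assumes "x \<noteq> y"
  shows "conway_coxeter E [x, y]"
proof -
  have "S \<notin> poly_tris E [x, y]" for S
  proof
    assume "S \<in> poly_tris E [x, y]"
    then have "S \<subseteq> {x, y}" "card S = 3" by (simp_all add: poly_tris_def)
    then show False using card_mono[of "{x, y}" S] assms by simp
  qed
  then have "poly_tris E [x, y] = {}" by blast
  then have "tri_count E [x, y] v = 0" for v
    by (simp add: tri_count_def)
  moreover have "poly_nbrs E [x, y] v = {x, y} - {v}" if "v \<in> {x, y}" for v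
  proof -
    have "{x, y} \<in> poly_adj E [x, y]"
      using consecutive_in_poly_edges[of x y "[]" "[]"] by (simp add: poly_adj_def)
    then show ?thesis
      using that by (auto simp: poly_nbrs_def insert_commute)
  qed
  ultimately show ?thesis
    using assms by (simp add: conway_coxeter_def quid_def one_mat2_def)
qed

lemma conway_coxeter_triangle:
  assumes "distinct [a, b, c]"
  shows "conway_coxeter E [a, b, c]"
proof -
  have adj: "{u, w} \<in> poly_adj E [a, b, c]" if "u \<in> {a, b, c}" "w \<in> {a, b, c}" "u \<noteq> w" for u w
    using that by (auto simp: poly_adj_def poly_edges_eq_path_edges insert_commute)
  have card3: "card {a, b, c} = 3" using assms by auto
  have "S = {a, b, c}" if "S \<subseteq> {a, b, c}" "card S = 3" for S
    using card_subset_eq[OF _ that(1)] that(2) card3 by simp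
  then have "poly_tris E [a, b, c] = {{a, b, c}}"
    using adj card3 by (auto simp: poly_tris_def)
  then have "tri_count E [a, b, c] v = 1" if "v \<in> {a, b, c}" for v
  proof -
    have "{S \<in> poly_tris E [a, b, c]. v \<in> S} = {{a, b, c}}"
      using that \<open>poly_tris E [a, b, c] = {{a, b, c}}\<close> by auto
    then show ?thesis by (simp add: tri_count_def)
  qed
  moreover have "card (poly_nbrs E [a, b, c] v) = 2" if "v \<in> {a, b, c}" for v
  proof -
    have "poly_nbrs E [a, b, c] v = {a, b, c} - {v}"
      using adj that by (auto simp: poly_nbrs_def)
    then show ?thesis using assms that by auto
  qed
  ultimately show ?thesis by (simp add: conway_coxeter_def quid_def one_mat2_def)
qed

text \<open>The chord x y may be a side of the polygon (B = []), and then the piece is a digon.\<close>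
locale polygon_split =
  fixes E :: "'v set set" and A B C :: "'v list" and x y :: 'v
  assumes distinct: "distinct (A @ x # B @ y # C)"
    and chord: "{x, y} \<in> poly_adj E (A @ x # B @ y # C)"
    and separated: "\<And>u w. u \<in> set B \<Longrightarrow> w \<in> set A \<union> set C \<Longrightarrow> {u, w} \<notin> E"
begin

abbreviation "whole \<equiv> A @ x # B @ y # C"
abbreviation "piece \<equiv> x # B @ [y]"
abbreviation "rest \<equiv> A @ x # y # C"

lemma edges_split: "poly_edges whole \<union> {{x, y}} = poly_edges piece \<union> poly_edges rest"
proof -
  have whole: "path_edges whole = path_edges (A @ [x]) \<union> path_edges piece \<union> path_edges (y # C)"
    using path_edges_append[of A x "B @ y # C"] path_edges_append[of "x # B" y C] by auto
  have rest: "path_edges rest = path_edges (A @ [x]) \<union> {{x, y}} \<union> path_edges (y # C)"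
    using path_edges_append[of A x "y # C"] by auto
  have ends: "last whole = last rest" "hd whole = hd rest"
    by (cases C; simp; cases A; simp)+
  have "poly_edges piece = insert {y, x} (path_edges piece)"
    by (subst poly_edges_eq_path_edges) auto
  then show ?thesis
    using whole rest ends poly_edges_eq_path_edges[of whole] poly_edges_eq_path_edges[of rest]
    by (auto simp: insert_commute)
qed

lemma chord_in_poly_edges: "{x, y} \<in> poly_edges piece" "{x, y} \<in> poly_edges rest"
  by (simp add: poly_edges_eq_path_edges insert_commute) (rule consecutive_in_poly_edges)

lemma piece_inter_rest: "set piece \<inter> set rest = {x, y}"
  using distinct by auto

lemma adj_split: "poly_adj E whole = poly_adj E piece \<union> poly_adj E rest"
  using edges_split chord chord_in_poly_edges unfolding poly_adj_def by blast

lemma adj_within: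
  assumes "P \<in> {piece, rest}" "u \<in> set P" "w \<in> set P" "u \<noteq> w"
  shows "{u, w} \<in> poly_adj E whole \<longleftrightarrow> {u, w} \<in> poly_adj E P"
proof
  assume "{u, w} \<in> poly_adj E whole"
  then have "{u, w} \<in> E \<or> {u, w} \<in> poly_edges piece \<or> {u, w} \<in> poly_edges rest"
    using adj_split unfolding poly_adj_def by blast
  then consider "{u, w} \<in> E" | Q where "Q \<in> {piece, rest}" "{u, w} \<in> poly_edges Q"
    by blast
  then show "{u, w} \<in> poly_adj E P"
  proof cases
    case (2 Q)
    show ?thesis
    proof (cases "{u, w} = {x, y}")
      case True
      then show ?thesis using assms(1) chord_in_poly_edges by (auto simp: poly_adj_def)
    next
      case False
      then have "\<not> {u, w} \<subseteq> set piece \<inter> set rest"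
        unfolding piece_inter_rest using assms(4) by (auto simp: doubleton_eq_iff)
      then have "Q = P"
        using poly_edges_subset[OF 2(2)] assms(1-3) 2(1) by blast
      then show ?thesis using 2(2) by (simp add: poly_adj_def)
    qed
  qed (simp add: poly_adj_def)
next
  assume "{u, w} \<in> poly_adj E P"
  then show "{u, w} \<in> poly_adj E whole"
    using assms(1) adj_split by auto
qed

lemma adj_across:
  assumes "u \<in> set B" "w \<in> set A \<union> set C"
  shows "{u, w} \<notin> poly_adj E whole"
proof
  assume "{u, w} \<in> poly_adj E whole"
  then have "{u, w} \<in> poly_edges piece \<or> {u, w} \<in> poly_edges rest \<or> {u, w} \<in> E"
    using adj_split unfolding poly_adj_def by blast
  moreover have "u \<notin> set rest" "w \<notin> set piece" using assms distinct by auto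
  ultimately have "{u, w} \<in> E" by (auto dest: poly_edges_subset)
  then show False using separated assms by blast
qed

lemma tris_split: "poly_tris E whole = poly_tris E piece \<union> poly_tris E rest"
proof (rule set_eqI, rule iffI)
  fix S assume S: "S \<in> poly_tris E whole"
  then have sub: "S \<subseteq> set piece \<union> set rest"
    and adj: "\<And>u w. u \<in> S \<Longrightarrow> w \<in> S \<Longrightarrow> u \<noteq> w \<Longrightarrow> {u, w} \<in> poly_adj E whole"
    by (auto simp: poly_tris_def)
  have "S \<subseteq> set piece \<or> S \<subseteq> set rest"
  proof (rule ccontr)
    assume "\<not> ?thesis"
    then obtain u w where "u \<in> S" "u \<notin> set rest" "w \<in> S" "w \<notin> set piece" by auto
    moreover from this sub have "u \<in> set B" "w \<in> set A \<union> set C" "u \<noteq> w" by auto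
    ultimately show False using adj adj_across by blast
  qed
  then obtain P where P: "P \<in> {piece, rest}" "S \<subseteq> set P" by blast
  then have "\<forall>u\<in>S. \<forall>w\<in>S. u \<noteq> w \<longrightarrow> {u, w} \<in> poly_adj E P"
    using adj adj_within by blast
  then have "S \<in> poly_tris E P" using S P(2) by (simp add: poly_tris_def)
  then show "S \<in> poly_tris E piece \<union> poly_tris E rest" using P(1) by auto
next
  fix S assume "S \<in> poly_tris E piece \<union> poly_tris E rest"
  then show "S \<in> poly_tris E whole" unfolding poly_tris_def adj_split by auto
qed

lemma tris_disjoint: "poly_tris E piece \<inter> poly_tris E rest = {}"
proof -
  have "S \<subseteq> {x, y}" "card S = 3" if "S \<in> poly_tris E piece" "S \<in> poly_tris E rest" for S
    using that piece_inter_rest by (auto simp: poly_tris_def)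
  then have "card S \<le> 2" "card S = 3"
    if "S \<in> poly_tris E piece" "S \<in> poly_tris E rest" for S
    using that card_mono[of "{x, y}" S] distinct by auto
  then show ?thesis by fastforce
qed

lemma tri_count_split: "tri_count E whole v = tri_count E piece v + tri_count E rest v"
proof -
  have "{S \<in> poly_tris E whole. v \<in> S} = {S \<in> poly_tris E piece. v \<in> S} \<union> {S \<in> poly_tris E rest. v \<in> S}"
    using tris_split by auto
  moreover have "finite {S \<in> poly_tris E P. v \<in> S}" for P
    by (rule finite_subset[OF _ finite_poly_tris]) auto
  ultimately show ?thesis unfolding tri_count_def using tris_disjoint
    by (simp add: card_Un_disjoint disjoint_iff)
qed

lemma nbrs_off_chord:
  assumes P: "P \<in> {piece, rest}" and v: "v \<in> set P" "v \<notin> {x, y}"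
  shows "poly_nbrs E whole v = poly_nbrs E P v"
proof (rule set_eqI)
  fix w
  show "w \<in> poly_nbrs E whole v \<longleftrightarrow> w \<in> poly_nbrs E P v"
  proof (cases "w \<in> set P")
    case True
    then show ?thesis
      using adj_within[OF P v(1) True] P by (auto simp: poly_nbrs_def)
  next
    case False
    have "{v, w} \<notin> poly_adj E whole" if "w \<in> set whole"
    proof (cases "P = piece")
      case True
      then show ?thesis using adj_across[of v w] v that False by auto
    next
      case False
      then have "P = rest" using P by simp
      then show ?thesis
        using adj_across[of w v] v that \<open>w \<notin> set P\<close> by (auto simp: insert_commute)
    qed
    then show ?thesis using False by (auto simp: poly_nbrs_def)
  qed
qed

lemma nbrs_on_chord:
  assumes v: "v \<in> {x, y}"
  shows "card (poly_nbrs E whole v) + 1 = card (poly_nbrs E piece v) + card (poly_nbrs E rest v)"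
proof -
  have in_parts: "v \<in> set piece" "v \<in> set rest" using v by auto
  have un: "poly_nbrs E whole v = poly_nbrs E piece v \<union> poly_nbrs E rest v"
  proof (rule set_eqI)
    fix w
    have part: "w \<in> set P \<and> w \<noteq> v \<and> {v, w} \<in> poly_adj E whole \<longleftrightarrow> w \<in> poly_nbrs E P v"
      if "P \<in> {piece, rest}" for P
      using adj_within[OF that, of v w] that in_parts unfolding poly_nbrs_def by blast
    have "w \<in> poly_nbrs E whole v \<longleftrightarrow>
        (\<exists>P\<in>{piece, rest}. w \<in> set P \<and> w \<noteq> v \<and> {v, w} \<in> poly_adj E whole)"
      unfolding poly_nbrs_def by auto
    then show "w \<in> poly_nbrs E whole v \<longleftrightarrow> w \<in> poly_nbrs E piece v \<union> poly_nbrs E rest v"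
      using part by blast
  qed
  have int: "poly_nbrs E piece v \<inter> poly_nbrs E rest v = {x, y} - {v}"
  proof
    show "poly_nbrs E piece v \<inter> poly_nbrs E rest v \<subseteq> {x, y} - {v}"
      using piece_inter_rest by (auto simp: poly_nbrs_def)
    show "{x, y} - {v} \<subseteq> poly_nbrs E piece v \<inter> poly_nbrs E rest v"
      using v chord_in_poly_edges by (auto simp: poly_nbrs_def poly_adj_def insert_commute)
  qed
  have "card ({x, y} - {v}) = 1" using v distinct by auto
  moreover have "finite (poly_nbrs E P v)" for P by (simp add: poly_nbrs_def)
  ultimately show ?thesis using card_Un_Int[of "poly_nbrs E piece v" "poly_nbrs E rest v"] un int
    by simp
qed

lemma quid_prod_split:
  assumes "conway_coxeter E piece"
  shows "quid_prod (map (tri_count E whole) whole) = quid_prod (map (tri_count E rest) rest)"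
proof (rule quid_prod_glue[where g = "tri_count E piece"])
  show "quid_prod (map (tri_count E piece) (x # B @ [y])) = - 1"
    using conway_coxeter_quid_prod[OF assms] .
qed (use distinct in \<open>auto simp: tri_count_split intro!: tri_count_outside\<close>)

lemma degree_split:
  assumes piece: "conway_coxeter E piece" and rest: "conway_coxeter E rest" and v: "v \<in> set whole"
  shows "tri_count E whole v = int (card (poly_nbrs E whole v)) - 1"
proof -
  note count = tri_count_split[of v]
  have degree: "tri_count E P v = int (card (poly_nbrs E P v)) - 1"
    if "P \<in> {piece, rest}" "v \<in> set P" for P
    using that conway_coxeter_tri_count[OF piece] conway_coxeter_tri_count[OF rest] by auto
  consider "v \<in> {x, y}" | "v \<in> set B" | "v \<in> set A \<union> set C"
    using v by auto
  then show ?thesis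
  proof cases
    case 1
    then have "int (card (poly_nbrs E whole v)) + 1
        = int (card (poly_nbrs E piece v)) + int (card (poly_nbrs E rest v))"
      using arg_cong[OF nbrs_on_chord[OF 1], of int] by simp
    moreover have "v \<in> set piece" "v \<in> set rest" using 1 by auto
    ultimately show ?thesis using degree[of piece] degree[of rest] count by simp
  next
    case 2
    then have "v \<notin> set rest" "v \<notin> {x, y}" using distinct by auto
    then show ?thesis
      using 2 nbrs_off_chord[of piece v] degree[of piece] tri_count_outside[of v rest] count
      by simp
  next
    case 3
    then have "v \<notin> set piece" "v \<notin> {x, y}" using distinct by auto
    then show ?thesis
      using 3 nbrs_off_chord[of rest v] degree[of rest] tri_count_outside[of v piece] count
      by auto
  qed
qed

lemma conway_coxeter_split:
  assumes "conway_coxeter E piece" "conway_coxeter E rest"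
  shows "conway_coxeter E whole"
  using quid_prod_split[OF assms(1)] conway_coxeter_quid_prod[OF assms(2)] degree_split[OF assms]
  unfolding conway_coxeter_def by metis

end

section \<open>Arcs of a triangulation of the strip\<close>

definition arc_chords :: "arc set \<Rightarrow> vert set set" where
  "arc_chords T = {ends \<alpha> | \<alpha>. \<alpha> \<in> T}"

lemma mem_arc_chords: "e \<in> arc_chords T \<longleftrightarrow> (\<exists>\<alpha>\<in>T. ends \<alpha> = e)"
  unfolding arc_chords_def by auto

lemma poly_triangles_poly_diags: "poly_triangles vs (poly_diags T vs) = poly_tris (arc_chords T) vs"
proof -
  have "{x, y} \<in> poly_edges vs \<union> poly_diags T vs \<longleftrightarrow> {x, y} \<in> poly_adj (arc_chords T) vs"
    if "x \<in> set vs" "y \<in> set vs" for x y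
    using that unfolding poly_adj_def poly_diags_def arc_chords_def by auto
  then show ?thesis unfolding poly_triangles_def poly_tris_def by blast
qed

lemma triangulation_valid: "triangulation T \<Longrightarrow> \<alpha> \<in> T \<Longrightarrow> valid_arc \<alpha>"
  unfolding triangulation_def by blast

lemma triangulation_no_cross: "triangulation T \<Longrightarrow> \<alpha> \<in> T \<Longrightarrow> \<beta> \<in> T \<Longrightarrow> \<not> cross \<alpha> \<beta>"
  unfolding triangulation_def by (metis arc.exhaust cross.simps(1-3) diff_self less_irrefl mult_eq_0_iff)

lemma triangulation_maximal:
  "triangulation T \<Longrightarrow> valid_arc \<alpha> \<Longrightarrow> \<alpha> \<notin> T \<Longrightarrow> \<exists>\<beta>\<in>T. cross \<alpha> \<beta>"
  unfolding triangulation_def by blast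

lemma conn_arcs_nested:
  assumes "triangulation T" "Conn p q \<in> T" "Conn p' q' \<in> T"
  shows "p \<le> p' \<and> q' \<le> q \<or> p' \<le> p \<and> q \<le> q'"
proof -
  have "\<not> (p - p') * (q - q') > 0" using triangulation_no_cross[OF assms] by simp
  then show ?thesis by (auto simp: zero_less_mult_iff not_less)
qed

lemma ends_inj:
  assumes "valid_arc \<alpha>" "valid_arc \<beta>" "ends \<alpha> = ends \<beta>"
  shows "\<alpha> = \<beta>"
  using assms by (cases \<alpha>; cases \<beta>) (auto simp: doubleton_eq_iff)

lemma ends_eq_Conn: "ends \<alpha> = {Up v, Lo u} \<Longrightarrow> \<alpha> = Conn v u"
  by (cases \<alpha>) (auto simp: doubleton_eq_iff)

text \<open>The two edges of the strip behave alike; foot v u is the end on this edge of the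
  connecting arc Conn v u.\<close>
locale strip_side =
  fixes V :: "int \<Rightarrow> vert" and A :: "int \<Rightarrow> int \<Rightarrow> arc" and foot :: "int \<Rightarrow> int \<Rightarrow> int"
  assumes inj_V: "inj V"
    and ends_A: "ends (A a b) = {V a, V b}"
    and ends_eq_A: "ends \<alpha> = {V a, V b} \<Longrightarrow> \<alpha> = A a b \<or> \<alpha> = A b a"
    and valid_A: "valid_arc (A a b) \<longleftrightarrow> a \<le> b - 2"
    and cross_A_A: "cross (A a b) (A c d) \<longleftrightarrow> a < c \<and> c < b \<and> b < d \<or> c < a \<and> a < d \<and> d < b"
    and cross_A_Conn: "cross (A a b) (Conn v u) \<longleftrightarrow> a < foot v u \<and> foot v u < b"
    and cross_A_other: "\<nexists>c d. \<beta> = A c d \<Longrightarrow> \<nexists>v u. \<beta> = Conn v u \<Longrightarrow> \<not> cross (A a b) \<beta>"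
begin

lemma chord_iff_arc:
  assumes T: "triangulation T" and "a < b"
  shows "{V a, V b} \<in> arc_chords T \<longleftrightarrow> A a b \<in> T"
proof
  assume "{V a, V b} \<in> arc_chords T"
  then obtain \<alpha> where \<alpha>: "\<alpha> \<in> T" "ends \<alpha> = {V a, V b}" by (auto simp: mem_arc_chords)
  then have "\<alpha> = A a b \<or> \<alpha> = A b a" "valid_arc \<alpha>"
    using ends_eq_A triangulation_valid[OF T] by auto
  then show "A a b \<in> T" using \<alpha>(1) \<open>a < b\<close> valid_A by auto
qed (use ends_A in \<open>auto simp: mem_arc_chords\<close>)

lemma V_eq_iff [simp]: "V a = V b \<longleftrightarrow> a = b"
  using inj_V by (simp add: inj_eq)

lemma map_V_upto_ends: "a < b \<Longrightarrow> map V [a..b] = V a # map V [a+1..b-1] @ [V b]"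
  by (simp add: upto_rec1[of a b] upto_rec2[of "a + 1" b])

lemma adj_next_or_arc:
  assumes "a < b" "b = a + 1 \<or> A a b \<in> T"
  shows "{V a, V b} \<in> poly_adj (arc_chords T) (X @ V a # map V [a+1..b-1] @ V b # Y)"
proof (cases "b = a + 1")
  case True
  then show ?thesis using consecutive_in_poly_edges[of "V a" "V b" X Y]
    by (simp add: poly_adj_def)
next
  case False
  then show ?thesis using assms ends_A by (force simp: poly_adj_def mem_arc_chords)
qed

lemma arc_closes_apex:
  assumes T: "triangulation T" and ab: "A a b \<in> T" and c: "a < c" "c < b"
    and inner: "\<And>e f. a \<le> e \<Longrightarrow> e < c \<Longrightarrow> c < f \<Longrightarrow> f \<le> b \<Longrightarrow> (e, f) \<noteq> (a, b) \<Longrightarrow> A e f \<notin> T"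
  shows "b = c + 1 \<or> A c b \<in> T"
proof (rule ccontr)
  assume "\<not> ?thesis"
  then have "valid_arc (A c b)" "A c b \<notin> T" using c valid_A by auto
  then obtain \<beta> where \<beta>: "\<beta> \<in> T" "cross (A c b) \<beta>" using triangulation_maximal[OF T] by blast
  have no_cross_ab: "\<not> cross (A a b) \<beta>" using triangulation_no_cross[OF T ab \<beta>(1)] .
  consider e f where "\<beta> = A e f" | v u where "\<beta> = Conn v u"
    | "\<nexists>e f. \<beta> = A e f" "\<nexists>v u. \<beta> = Conn v u" by blast
  then show False
  proof cases
    case (1 e f)
    then have "a \<le> e" "e < c" "c < f" "f < b"
      using \<beta>(2) no_cross_ab c by (auto simp: cross_A_A)
    then show False using inner[of e f] \<beta>(1) 1 by auto
  next
    case (2 v u)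
    then show False using \<beta>(2) no_cross_ab c by (simp add: cross_A_Conn)
  next
    case 3
    then show False using \<beta>(2) cross_A_other by blast
  qed
qed

text \<open>The triangle of the triangulation on the inner side of an arc A a b: its apex c is the
  farthest vertex joined to a below b.\<close>
lemma arc_apex:
  assumes T: "triangulation T" and ab: "A a b \<in> T"
  obtains c where "a < c" "c < b" "c = a + 1 \<or> A a c \<in> T" "b = c + 1 \<or> A c b \<in> T"
    "\<And>e f. a \<le> e \<Longrightarrow> e < c \<Longrightarrow> c < f \<Longrightarrow> f \<le> b \<Longrightarrow> (e, f) \<noteq> (a, b) \<Longrightarrow> A e f \<notin> T"
proof -
  have "a + 2 \<le> b" using triangulation_valid[OF T ab] valid_A by simp
  define C where "C = {c. a < c \<and> c < b \<and> (c = a + 1 \<or> A a c \<in> T)}"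
  define c where "c = Max C"
  have "finite C" by (rule finite_subset[of _ "{a..b}"]) (auto simp: C_def)
  moreover have "a + 1 \<in> C" using \<open>a + 2 \<le> b\<close> by (simp add: C_def)
  ultimately have "c \<in> C" and c_max: "\<And>d. d \<in> C \<Longrightarrow> d \<le> c"
    unfolding c_def by (auto intro: Max_in)
  then have c: "a < c" "c < b" "c = a + 1 \<or> A a c \<in> T" by (simp_all add: C_def)
  have inner: "A e f \<notin> T" if "a \<le> e" "e < c" "c < f" "f \<le> b" "(e, f) \<noteq> (a, b)" for e f
  proof
    assume ef: "A e f \<in> T"
    show False
    proof (cases "e = a")
      case True
      then have "f \<in> C" using that ef by (auto simp: C_def)
      then show False using c_max \<open>c < f\<close> by fastforce
    next
      case False
      then have ac: "A a c \<in> T" using c that by auto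
      show False
        using triangulation_no_cross[OF T ac ef] that False by (simp add: cross_A_A)
    qed
  qed
  show ?thesis using that c inner arc_closes_apex[OF T ab c(1,2) inner] by blast
qed

lemma conway_coxeter_apex:
  assumes "a \<le> b" "b \<le> a + 1 \<or> A a b \<in> T"
    and side: "a < b \<Longrightarrow> conway_coxeter (arc_chords T) (map V [a..b])"
    and w: "P @ Q = [w]" "w \<notin> V ` {a..b}"
    and no_chord: "\<And>e. a < e \<Longrightarrow> e < b \<Longrightarrow> {V e, w} \<notin> arc_chords T"
  shows "conway_coxeter (arc_chords T) (P @ map V [a..b] @ Q)"
proof (cases "a = b")
  case True
  have "V a \<noteq> w" using w(2) True by auto
  then show ?thesis
    using True w(1) conway_coxeter_digon[of w "V a"] conway_coxeter_digon[of "V a" w]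
    by (cases P) auto
next
  case False
  then have ab: "a < b" "b = a + 1 \<or> A a b \<in> T" using assms(1,2) by auto
  have "conway_coxeter (arc_chords T) (P @ V a # map V [a+1..b-1] @ V b # Q)"
  proof (rule polygon_split.conway_coxeter_split)
    have "P = [] \<and> Q = [w] \<or> P = [w] \<and> Q = []" using w(1) by (cases P) auto
    then show "polygon_split (arc_chords T) P (map V [a+1..b-1]) Q (V a) (V b)"
      using w(2) ab no_chord adj_next_or_arc[OF ab, of P Q]
      by unfold_locales (auto simp: distinct_map inj_on_def insert_commute)
    show "conway_coxeter (arc_chords T) (V a # map V [a+1..b-1] @ [V b])"
      using side ab by (simp add: map_V_upto_ends)
    have "V a \<noteq> w" "V b \<noteq> w" using w(2) ab(1) by auto
    then show "conway_coxeter (arc_chords T) (P @ V a # V b # Q)"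
      using w(1) ab by (cases P) (auto intro!: conway_coxeter_triangle)
  qed
  then show ?thesis using ab by (simp add: map_V_upto_ends)
qed

lemma conway_coxeter_interval:
  assumes T: "triangulation T"
  shows "a < b \<Longrightarrow> b = a + 1 \<or> A a b \<in> T \<Longrightarrow> conway_coxeter (arc_chords T) (map V [a..b])"
proof (induction "nat (b - a)" arbitrary: a b rule: less_induct)
  case less
  show ?case
  proof (cases "b = a + 1")
    case True
    then show ?thesis using conway_coxeter_digon[of "V a" "V b"] by (simp add: upto_rec1)
  next
    case False
    then have ab: "A a b \<in> T" using less.prems by simp
    obtain c where c: "a < c" "c < b" "c = a + 1 \<or> A a c \<in> T" "b = c + 1 \<or> A c b \<in> T"
      and inner: "\<And>e f. a \<le> e \<Longrightarrow> e < c \<Longrightarrow> c < f \<Longrightarrow> f \<le> b \<Longrightarrow> (e, f) \<noteq> (a, b) \<Longrightarrow> A e f \<notin> T"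
      using arc_apex[OF T ab] by blast
    have no_chord: "{V e, V f} \<notin> arc_chords T" "{V f, V e} \<notin> arc_chords T"
      if "a \<le> e" "e < c" "c < f" "f \<le> b" "(e, f) \<noteq> (a, b)" for e f
      using inner[OF that] chord_iff_arc[OF T, of e f] that by (simp_all add: insert_commute)
    have "conway_coxeter (arc_chords T) ([] @ map V [a..c] @ [V b])"
      using less.hyps[of c a] c no_chord by (intro conway_coxeter_apex) auto
    then have "conway_coxeter (arc_chords T) (map V [a..c-1] @ V c # map V [c+1..b-1] @ V b # [])"
    proof (intro polygon_split.conway_coxeter_split)
      show "polygon_split (arc_chords T) (map V [a..c-1]) (map V [c+1..b-1]) [] (V c) (V b)"
        by unfold_locales
          (use c no_chord adj_next_or_arc[of c b T "map V [a..c-1]" "[]"] in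
            \<open>auto simp: distinct_map inj_on_def\<close>)
      show "conway_coxeter (arc_chords T) (V c # map V [c+1..b-1] @ [V b])"
        using less.hyps[of b c] c by (simp add: map_V_upto_ends)
    qed (use c in \<open>simp add: map_V_upto_ends upto_rec1[of a "c - 1"]\<close>)
    then show ?thesis using c by (simp add: upto_split3[of a c b] upto_rec2[of "c + 1" b])
  qed
qed

lemma arc_or_inner_conn:
  assumes T: "triangulation T" and vu: "Conn v u \<in> T" "a = foot v u"
    and vu': "Conn v' u' \<in> T" "b = foot v' u'" and "a + 2 \<le> b"
  shows "A a b \<in> T \<or> (\<exists>v'' u''. Conn v'' u'' \<in> T \<and> a < foot v'' u'' \<and> foot v'' u'' < b)"
proof (cases "A a b \<in> T")
  case False
  moreover have "valid_arc (A a b)" using \<open>a + 2 \<le> b\<close> valid_A by simp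
  ultimately obtain \<beta> where \<beta>: "\<beta> \<in> T" "cross (A a b) \<beta>"
    using triangulation_maximal[OF T] by blast
  consider e f where "\<beta> = A e f" | v'' u'' where "\<beta> = Conn v'' u''"
    | "\<nexists>e f. \<beta> = A e f" "\<nexists>v u. \<beta> = Conn v u" by blast
  then show ?thesis
  proof cases
    case (1 e f)
    then show ?thesis
      using \<beta> triangulation_no_cross[OF T \<beta>(1) vu(1)] triangulation_no_cross[OF T \<beta>(1) vu'(1)] vu vu'
      by (auto simp: cross_A_A cross_A_Conn)
  next
    case (2 v'' u'')
    then show ?thesis using \<beta> by (auto simp: cross_A_Conn)
  next
    case 3
    then show ?thesis using \<beta>(2) cross_A_other by blast
  qed
qed simp

end

interpretation upper: strip_side Up UpA "\<lambda>v u. v"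
proof
  fix \<alpha> a b
  assume "ends \<alpha> = {Up a, Up b}"
  then show "\<alpha> = UpA a b \<or> \<alpha> = UpA b a" by (cases \<alpha>) (auto simp: doubleton_eq_iff)
next
  fix \<beta> a b
  assume "\<nexists>c d. \<beta> = UpA c d" "\<nexists>v u. \<beta> = Conn v u"
  then show "\<not> cross (UpA a b) \<beta>" by (cases \<beta>) auto
qed (simp_all add: inj_def)

interpretation lower: strip_side Lo LoA "\<lambda>v u. u"
proof
  fix \<alpha> a b
  assume "ends \<alpha> = {Lo a, Lo b}"
  then show "\<alpha> = LoA a b \<or> \<alpha> = LoA b a" by (cases \<alpha>) (auto simp: doubleton_eq_iff)
next
  fix \<beta> a b
  assume "\<nexists>c d. \<beta> = LoA c d" "\<nexists>v u. \<beta> = Conn v u"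
  then show "\<not> cross (LoA a b) \<beta>" by (cases \<beta>) auto
qed (simp_all add: inj_def)

section \<open>Polygons cut out of the strip by two connecting arcs\<close>

lemma conn_between:
  assumes T: "triangulation T" and arcs: "Conn p q \<in> T" "Conn r s \<in> T" "Conn v u \<in> T"
    and "p \<le> r" "s \<le> q" and between: "p < v \<and> v < r \<or> s < u \<and> u < q"
  shows "p \<le> v \<and> v \<le> r \<and> s \<le> u \<and> u \<le> q"
  using conn_arcs_nested[OF T arcs(1,3)] conn_arcs_nested[OF T arcs(2,3)] assms(5-) by auto

lemma strip_poly_decomp:
  assumes "p \<le> v" "v \<le> r" "s \<le> u" "u \<le> q"
  shows "strip_poly p r s q
      = map Up [p..v-1] @ Up v # (map Up [v+1..r] @ map Lo [s..u-1]) @ Lo u # map Lo [u+1..q]"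
    and "strip_poly v r s u = Up v # (map Up [v+1..r] @ map Lo [s..u-1]) @ [Lo u]"
    and "strip_poly p v u q = map Up [p..v-1] @ Up v # Lo u # map Lo [u+1..q]"
  using assms by (simp_all add: strip_poly_def upto_split3[of p v r] upto_split3[of s u q]
      upto_rec1[of v r] upto_rec2[of s u] upto_rec2[of p v] upto_rec1[of u q])

lemma strip_polygon_split:
  assumes T: "triangulation T" and vu: "Conn v u \<in> T"
  shows "polygon_split (arc_chords T) (map Up [p..v-1]) (map Up [v+1..r] @ map Lo [s..u-1])
    (map Lo [u+1..q]) (Up v) (Lo u)"
proof
  show "distinct (map Up [p..v-1] @ Up v # (map Up [v+1..r] @ map Lo [s..u-1]) @ Lo u # map Lo [u+1..q])"
    by (auto simp: distinct_map inj_on_def)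
  show "{Up v, Lo u} \<in> poly_adj (arc_chords T)
      (map Up [p..v-1] @ Up v # (map Up [v+1..r] @ map Lo [s..u-1]) @ Lo u # map Lo [u+1..q])"
    using vu by (force simp: poly_adj_def mem_arc_chords)
  fix x w assume x: "x \<in> set (map Up [v+1..r] @ map Lo [s..u-1])"
    and w: "w \<in> set (map Up [p..v-1]) \<union> set (map Lo [u+1..q])"
  show "{x, w} \<notin> arc_chords T"
  proof
    assume "{x, w} \<in> arc_chords T"
    then obtain \<alpha> where \<alpha>: "\<alpha> \<in> T" "ends \<alpha> = {x, w}" by (auto simp: mem_arc_chords)
    have "cross \<alpha> (Conn v u)"
      using x w \<alpha>(2) triangulation_valid[OF T \<alpha>(1)]
      by (cases \<alpha>) (auto simp: doubleton_eq_iff mult_neg_neg)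
    then show False using triangulation_no_cross[OF T \<alpha>(1) vu] by simp
  qed
qed

lemma conway_coxeter_strip_split:
  assumes T: "triangulation T" and vu: "Conn v u \<in> T"
    and le: "p \<le> v" "v \<le> r" "s \<le> u" "u \<le> q"
    and "conway_coxeter (arc_chords T) (strip_poly v r s u)"
    and "conway_coxeter (arc_chords T) (strip_poly p v u q)"
  shows "conway_coxeter (arc_chords T) (strip_poly p r s q)"
  using polygon_split.conway_coxeter_split[OF strip_polygon_split[OF T vu]] assms(7,8)
  unfolding strip_poly_decomp[OF le] by simp

lemma tri_count_strip_split:
  assumes T: "triangulation T" and vu: "Conn v u \<in> T"
    and le: "p \<le> v" "v \<le> r" "s \<le> u" "u \<le> q"
  shows "tri_count (arc_chords T) (strip_poly p r s q) x
    = tri_count (arc_chords T) (strip_poly v r s u) x + tri_count (arc_chords T) (strip_poly p v u q) x"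
  using polygon_split.tri_count_split[OF strip_polygon_split[OF T vu]]
  unfolding strip_poly_decomp[OF le] by simp

lemma strip_poly_no_inner_conn:
  assumes T: "triangulation T" and pq: "Conn p q \<in> T" and rs: "Conn r s \<in> T"
    and "p \<le> r" "s \<le> q"
    and no_inner: "\<And>v u. Conn v u \<in> T \<Longrightarrow> p \<le> v \<Longrightarrow> v \<le> r \<Longrightarrow> s \<le> u \<Longrightarrow> u \<le> q
      \<Longrightarrow> (v, u) \<in> {(p, q), (r, s)}"
  shows "s = q \<or> p = r"
proof (rule ccontr)
  assume "\<not> ?thesis"
  then have "p < r" "s < q" using assms(4,5) by auto
  then have "Conn r q \<notin> T" using no_inner[of r q] by auto
  then obtain \<beta> where \<beta>: "\<beta> \<in> T" "cross (Conn r q) \<beta>"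
    using triangulation_maximal[OF T, of "Conn r q"] by auto
  show False
  proof (cases \<beta>)
    case (Conn v u)
    then have vu: "Conn v u \<in> T" using \<beta>(1) by simp
    have "v < r \<and> u < q \<or> r < v \<and> q < u" using \<beta>(2) Conn by (auto simp: zero_less_mult_iff)
    then show False
      using conn_arcs_nested[OF T pq vu] conn_arcs_nested[OF T rs vu] no_inner[OF vu]
        \<open>p < r\<close> \<open>s < q\<close> by auto
  next
    case (UpA e f)
    then show False using \<beta> triangulation_no_cross[OF T \<beta>(1) rs] by simp
  next
    case (LoA e f)
    then show False using \<beta> triangulation_no_cross[OF T \<beta>(1) pq] by simp
  qed
qed

text \<open>Without inner connecting arcs the polygon degenerates to a fan: a run of vertices on
  one edge of the strip, closed up by a single vertex on the other edge.\<close>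
lemma conway_coxeter_strip_fan:
  assumes T: "triangulation T" and pq: "Conn p q \<in> T" and rs: "Conn r s \<in> T"
    and "p \<le> r" "s \<le> q"
    and no_inner: "\<And>v u. Conn v u \<in> T \<Longrightarrow> p \<le> v \<Longrightarrow> v \<le> r \<Longrightarrow> s \<le> u \<Longrightarrow> u \<le> q
      \<Longrightarrow> (v, u) \<in> {(p, q), (r, s)}"
  shows "conway_coxeter (arc_chords T) (strip_poly p r s q)"
proof -
  have no_conn: "Conn v u \<notin> T" if "p < v \<and> v < r \<or> s < u \<and> u < q" for v u
    using conn_between[OF T pq rs _ assms(4,5) that] no_inner[of v u] that by auto
  consider "s = q" | "p = r" using strip_poly_no_inner_conn[OF assms] by blast
  then show ?thesis
  proof cases
    case 1
    have "r \<le> p + 1 \<or> UpA p r \<in> T"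
      using upper.arc_or_inner_conn[OF T pq _ rs, of p r] no_conn by fastforce
    moreover have "{Up e, Lo s} \<notin> arc_chords T" if "p < e" "e < r" for e
      using no_conn[of e s] that by (auto simp: mem_arc_chords dest: ends_eq_Conn)
    moreover from calculation(1) have "p < r \<Longrightarrow> conway_coxeter (arc_chords T) (map Up [p..r])"
      using upper.conway_coxeter_interval[OF T, of p r] by auto
    ultimately show ?thesis
      using upper.conway_coxeter_apex[OF \<open>p \<le> r\<close>, of T "[]" "[Lo s]" "Lo s"] 1
      by (simp add: strip_poly_def image_iff)
  next
    case 2
    have "q \<le> s + 1 \<or> LoA s q \<in> T"
      using lower.arc_or_inner_conn[OF T rs _ pq, of s q] no_conn by fastforce
    moreover have "{Lo e, Up p} \<notin> arc_chords T" if "s < e" "e < q" for e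
      using no_conn[of p e] ends_eq_Conn that by (auto simp: mem_arc_chords insert_commute)
    moreover from calculation(1) have "s < q \<Longrightarrow> conway_coxeter (arc_chords T) (map Lo [s..q])"
      using lower.conway_coxeter_interval[OF T, of s q] by auto
    ultimately show ?thesis
      using lower.conway_coxeter_apex[OF \<open>s \<le> q\<close>, of T "[Up p]" "[]" "Up p"] 2
      by (simp add: strip_poly_def image_iff)
  qed
qed

lemma conway_coxeter_strip_poly:
  assumes T: "triangulation T"
  shows "Conn p q \<in> T \<Longrightarrow> Conn r s \<in> T \<Longrightarrow> p \<le> r \<Longrightarrow> s \<le> q
    \<Longrightarrow> conway_coxeter (arc_chords T) (strip_poly p r s q)"
proof (induction "nat ((r - p) + (q - s))" arbitrary: p r s q rule: less_induct)
  case less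
  show ?case
  proof (cases "\<exists>v u. Conn v u \<in> T \<and> p \<le> v \<and> v \<le> r \<and> s \<le> u \<and> u \<le> q \<and> (v, u) \<notin> {(p, q), (r, s)}")
    case True
    then obtain v u where vu: "Conn v u \<in> T" "p \<le> v" "v \<le> r" "s \<le> u" "u \<le> q"
      "(v, u) \<notin> {(p, q), (r, s)}" by blast
    have "conway_coxeter (arc_chords T) (strip_poly v r s u)"
      using less.hyps[of r v u s] less.prems vu by auto
    moreover have "conway_coxeter (arc_chords T) (strip_poly p v u q)"
      using less.hyps[of v p q u] less.prems vu by auto
    ultimately show ?thesis using conway_coxeter_strip_split[OF T vu(1-5)] by blast
  next
    case False
    then show ?thesis using conway_coxeter_strip_fan[OF T less.prems] by blast
  qed
qed

section \<open>Friese numbers as continuants\<close>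

lemma mseq_quid_prod:
  "k + d < N \<Longrightarrow>
     \<exists>x y. quid_prod (map a [k+1..<k+1+d]) = Mat2 (mseq a N k (Suc d)) x (mseq a N k d) y"
proof (induction d)
  case 0
  then show ?case by (simp add: one_mat2_def)
next
  case (Suc d)
  then obtain x y where xy: "quid_prod (map a [k+1..<k+1+d]) = Mat2 (mseq a N k (Suc d)) x (mseq a N k d) y"
    by auto
  have "(k + d + 1) mod N = k + 1 + d" using Suc.prems by simp
  then have mseq: "mseq a N k (Suc (Suc d)) = a (k+1+d) * mseq a N k (Suc d) - mseq a N k d"
    by (simp only: mseq.simps)
  have "[k+1..<k+1+Suc d] = [k+1..<k+1+d] @ [k+1+d]" by simp
  then have "quid_prod (map a [k+1..<k+1+Suc d]) = quid (a (k+1+d)) * Mat2 (mseq a N k (Suc d)) x (mseq a N k d) y"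
    by (simp only: map_append list.map quid_prod_append xy quid_prod_Cons quid_prod_Nil
        mult.left_neutral)
  then show ?case unfolding mseq by (simp add: quid_def del: upt_Suc)
qed

lemma vidx_nth: "distinct vs \<Longrightarrow> n < length vs \<Longrightarrow> vidx vs (vs ! n) = n"
  unfolding vidx_def by (rule the_equality) (auto simp: nth_eq_iff_index_eq)

lemma friese_segment:
  assumes dist: "distinct (X @ Z @ Y)" and "X \<noteq> []" "Y \<noteq> []"
  shows "friese (X @ Z @ Y) (poly_diags T (X @ Z @ Y)) (last X) (hd Y)
    = mat2_11 (quid_prod (map (tri_count (arc_chords T) (X @ Z @ Y)) Z))"
proof -
  define vs where "vs = X @ Z @ Y"
  define k where "k = length X - 1"
  define N where "N = length vs"
  have len: "length X > 0" "length Y > 0" using assms by auto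
  have "last X = vs ! k" "hd Y = vs ! (k + 1 + length Z)"
    using assms(2,3) len by (simp_all add: vs_def k_def last_conv_nth hd_conv_nth nth_append)
  moreover have "k + 1 + length Z < length vs" using len by (simp add: vs_def k_def)
  ultimately have idx: "vidx vs (last X) = k" "vidx vs (hd Y) = k + 1 + length Z"
    using vidx_nth[of vs] dist unfolding vs_def[symmetric] by auto
  have N: "N = length X + length Z + length Y" by (simp add: N_def vs_def)
  have "k + 1 + length Z + N - k = Suc (length Z) + N" "Suc (length Z) < N"
    using len unfolding N k_def by linarith+
  then have "(k + 1 + length Z + N - k) mod N = Suc (length Z)" by (metis mod_add_self2 mod_less)
  moreover have "k + length Z < N" using len unfolding N k_def by linarith
  moreover have "map (tri_at vs (poly_diags T vs)) [k+1..<k+1+length Z]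
      = map (tri_count (arc_chords T) vs) Z"
  proof (rule nth_equalityI)
    fix n assume "n < length (map (tri_at vs (poly_diags T vs)) [k+1..<k+1+length Z])"
    then have n: "n < length Z" by (simp del: upt_Suc)
    then have "k + 1 + n < length vs" "vs ! (k + 1 + n) = Z ! n"
      using len by (auto simp: vs_def k_def nth_append)
    then show "map (tri_at vs (poly_diags T vs)) [k+1..<k+1+length Z] ! n
        = map (tri_count (arc_chords T) vs) Z ! n"
      using n by (simp add: tri_at_def tri_count_def poly_triangles_poly_diags del: upt_Suc)
  qed (simp del: upt_Suc)
  ultimately show ?thesis
    using mseq_quid_prod[of k "length Z" N "tri_at vs (poly_diags T vs)"]
    unfolding friese_def Let_def vs_def[symmetric] N_def[symmetric] idx by auto
qed

definition strip_entry :: "arc set \<Rightarrow> int \<Rightarrow> int \<Rightarrow> int \<Rightarrow> int \<Rightarrow> int \<Rightarrow> int \<Rightarrow> int" where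
  "strip_entry T p r s q i a = mat2_11 (quid_prod
     (map (tri_count (arc_chords T) (strip_poly p r s q)) (map Up [i+1..r] @ map Lo [s..a-1])))"

lemma friese_strip_poly:
  assumes "p < i" "i < r" "s < a" "a < q"
  shows "friese (strip_poly p r s q) (poly_diags T (strip_poly p r s q)) (Up i) (Lo a)
    = strip_entry T p r s q i a"
proof -
  have "strip_poly p r s q = map Up [p..i] @ (map Up [i+1..r] @ map Lo [s..a-1]) @ map Lo [a..q]"
    using assms by (simp add: strip_poly_def upto_split2[of p i r] upto_split1[of s a q])
  moreover have "last (map Up [p..i]) = Up i" "hd (map Lo [a..q]) = Lo a"
    using assms by (simp_all add: upto_rec2[of p i] upto_rec1[of a q])
  moreover have "distinct (strip_poly p r s q)"
    by (auto simp: strip_poly_def distinct_map inj_on_def)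
  ultimately show ?thesis
    using friese_segment[of "map Up [p..i]" "map Up [i+1..r] @ map Lo [s..a-1]" "map Lo [a..q]" T]
      assms unfolding strip_entry_def by auto
qed

section \<open>Independence of the bounding arcs\<close>

text \<open>The polygon between Conn r s and Conn r' s' is glued onto the side r s; its quiddity
  relation leaves the continuant along the path from i to a unchanged.\<close>
lemma strip_entry_extend_right:
  assumes T: "triangulation T" and rs: "Conn r s \<in> T"
    and rs': "Conn r' s' \<in> T" and "r \<le> r'" "s' \<le> s"
    and ia: "p < i" "i < r" "s < a" "a < q"
  shows "strip_entry T p r s q i a = strip_entry T p r' s' q i a"
proof -
  let ?c = "tri_count (arc_chords T) (strip_poly p r s q)"
  let ?c' = "tri_count (arc_chords T) (strip_poly p r' s' q)"
  let ?g = "tri_count (arc_chords T) (strip_poly r r' s' s)"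
  have le: "p \<le> r" "r \<le> r'" "s' \<le> s" "s \<le> q" using assms by auto
  have count: "?c' v = ?g v + ?c v" for v
    by (rule tri_count_strip_split[OF T rs le])
  have "conway_coxeter (arc_chords T) (strip_poly r r' s' s)"
    using conway_coxeter_strip_poly[OF T rs rs'] le by simp
  moreover have "strip_poly r r' s' s = Up r # (map Up [r+1..r'] @ map Lo [s'..s-1]) @ [Lo s]"
    using strip_poly_decomp(2)[of r r r' s' s s] le by simp
  ultimately have closed:
    "quid_prod (map ?g (Up r # (map Up [r+1..r'] @ map Lo [s'..s-1]) @ [Lo s])) = - 1"
    using conway_coxeter_quid_prod by metis
  have outside_g: "?g v = 0" if "v \<in> set (map Up [i+1..r-1]) \<union> set (map Lo [s+1..a-1])" for v
    using that ia by (intro tri_count_outside) (auto simp: strip_poly_def)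
  have outside_c: "?c v = 0" if "v \<in> set (map Up [r+1..r'] @ map Lo [s'..s-1])" for v
    using that by (intro tri_count_outside) (auto simp: strip_poly_def)
  have "map Up [i+1..r'] @ map Lo [s'..a-1] = map Up [i+1..r-1] @ Up r #
      (map Up [r+1..r'] @ map Lo [s'..s-1]) @ Lo s # map Lo [s+1..a-1]"
    using assms by (simp add: upto_split3[of "i + 1" r r'] upto_split3[of s' s "a - 1"])
  moreover have "map Up [i+1..r] @ map Lo [s..a-1] = map Up [i+1..r-1] @ Up r # Lo s # map Lo [s+1..a-1]"
    using assms by (simp add: upto_rec2[of "i + 1" r] upto_rec1[of s "a - 1"])
  moreover have "quid_prod (map ?c' (map Up [i+1..r-1] @ Up r #
      (map Up [r+1..r'] @ map Lo [s'..s-1]) @ Lo s # map Lo [s+1..a-1]))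
    = quid_prod (map ?c (map Up [i+1..r-1] @ Up r # Lo s # map Lo [s+1..a-1]))"
    by (rule quid_prod_glue[OF closed]) (simp_all add: count outside_g outside_c)
  ultimately show ?thesis unfolding strip_entry_def by simp
qed

lemma strip_entry_extend_left:
  assumes T: "triangulation T" and pq: "Conn p q \<in> T"
    and "p' \<le> p" "q \<le> q'" and ia: "p < i" "i < r" "s < a" "a < q"
  shows "strip_entry T p r s q i a = strip_entry T p' r s q' i a"
proof -
  have le: "p' \<le> p" "p \<le> r" "s \<le> q" "q \<le> q'" using assms by auto
  have "tri_count (arc_chords T) (strip_poly p' r s q') v = tri_count (arc_chords T) (strip_poly p r s q) v"
    if "v \<in> set (map Up [i+1..r] @ map Lo [s..a-1])" for v
  proof -
    have "v \<notin> set (strip_poly p' p q q')" using that ia by (auto simp: strip_poly_def)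
    then show ?thesis using tri_count_strip_split[OF T pq le, of v] tri_count_outside by simp
  qed
  then have "map (tri_count (arc_chords T) (strip_poly p' r s q')) (map Up [i+1..r] @ map Lo [s..a-1])
      = map (tri_count (arc_chords T) (strip_poly p r s q)) (map Up [i+1..r] @ map Lo [s..a-1])"
    by (rule map_cong[OF refl])
  then show ?thesis unfolding strip_entry_def by (simp only:)
qed

lemma strip_entry_indep:
  assumes T: "triangulation T"
    and arcs1: "Conn p1 q1 \<in> T" "Conn r1 s1 \<in> T" "p1 < i" "i < r1" "s1 < a" "a < q1"
    and arcs2: "Conn p2 q2 \<in> T" "Conn r2 s2 \<in> T" "p2 < i" "i < r2" "s2 < a" "a < q2"
  shows "strip_entry T p1 r1 s1 q1 i a = strip_entry T p2 r2 s2 q2 i a"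
proof -
  obtain p q where pq: "Conn p q \<in> T" "p \<le> p1" "p \<le> p2" "q1 \<le> q" "q2 \<le> q"
    using conn_arcs_nested[OF T arcs1(1) arcs2(1)] arcs1(1) arcs2(1) by (metis order_refl)
  obtain r s where rs: "Conn r s \<in> T" "r1 \<le> r" "r2 \<le> r" "s \<le> s1" "s \<le> s2"
    using conn_arcs_nested[OF T arcs1(2) arcs2(2)] arcs1(2) arcs2(2) by (metis order_refl)
  have "strip_entry T pk rk sk qk i a = strip_entry T p r s q i a"
    if "Conn pk qk \<in> T" "Conn rk sk \<in> T" "p \<le> pk" "qk \<le> q" "rk \<le> r" "s \<le> sk"
      "pk < i" "i < rk" "sk < a" "a < qk" for pk qk rk sk
  proof -
    have "strip_entry T pk rk sk qk i a = strip_entry T pk r s qk i a"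
      using strip_entry_extend_right[OF T that(2) rs(1)] that by blast
    also have "\<dots> = strip_entry T p r s q i a"
      using strip_entry_extend_left[OF T that(1)] pq that by force
    finally show ?thesis .
  qed
  then show ?thesis using arcs1 arcs2 pq rs by metis
qed

lemma Phi_eq_strip_entry:
  assumes T: "triangulation T" and arcs: "Conn p q \<in> T" "Conn r s \<in> T"
    and ia: "p < i" "i < r" "s < a" "a < q"
  shows "Phi T i a = strip_entry T p r s q i a"
proof -
  let ?P = "\<lambda>v. \<exists>p q r s. Conn p q \<in> T \<and> Conn r s \<in> T \<and> p < i \<and> i < r \<and> s < a \<and> a < q \<and>
       v = friese (strip_poly p r s q) (poly_diags T (strip_poly p r s q)) (Up i) (Lo a)"
  have "?P (strip_entry T p r s q i a)"
    using arcs ia friese_strip_poly[OF ia, of T, symmetric] by blast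
  then have "?P (Phi T i a)" unfolding Phi_def by (rule someI[of ?P])
  then obtain p' q' r' s' where
    arcs': "Conn p' q' \<in> T" "Conn r' s' \<in> T" "p' < i" "i < r'" "s' < a" "a < q'"
    and "Phi T i a = friese (strip_poly p' r' s' q') (poly_diags T (strip_poly p' r' s' q')) (Up i) (Lo a)"
    by blast
  then have "Phi T i a = strip_entry T p' r' s' q' i a"
    using friese_strip_poly[OF arcs'(3-6)] by simp
  also have "\<dots> = strip_entry T p r s q i a"
    by (rule strip_entry_indep[OF T arcs' arcs ia])
  finally show ?thesis .
qed

section \<open>Vertex degrees\<close>

fun other_end :: "int \<Rightarrow> arc \<Rightarrow> vert" where
  "other_end j (Conn p q) = Lo q"
| "other_end j (UpA a b) = (if a = j then Up b else Up a)"
| "other_end j (LoA a b) = Lo a"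

lemma ends_other_end:
  "valid_arc \<alpha> \<Longrightarrow> Up j \<in> ends \<alpha> \<Longrightarrow> ends \<alpha> = {Up j, other_end j \<alpha>} \<and> other_end j \<alpha> \<noteq> Up j"
  by (cases \<alpha>) auto

lemma card_arcs_at:
  assumes T: "triangulation T"
  shows "card {\<alpha> \<in> T. Up j \<in> ends \<alpha>} = card {w. w \<noteq> Up j \<and> {Up j, w} \<in> arc_chords T}"
proof -
  let ?A = "{\<alpha> \<in> T. Up j \<in> ends \<alpha>}"
  have ends: "ends \<alpha> = {Up j, other_end j \<alpha>} \<and> other_end j \<alpha> \<noteq> Up j" if "\<alpha> \<in> ?A" for \<alpha>
    using that ends_other_end[OF triangulation_valid[OF T]] by simp
  have inj: "inj_on (other_end j) ?A"
  proof (rule inj_onI)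
    fix \<alpha> \<beta> assume \<alpha>: "\<alpha> \<in> ?A" and \<beta>: "\<beta> \<in> ?A" and "other_end j \<alpha> = other_end j \<beta>"
    then have "ends \<alpha> = ends \<beta>" using ends[OF \<alpha>] ends[OF \<beta>] by simp
    then show "\<alpha> = \<beta>" using \<alpha> \<beta> triangulation_valid[OF T] ends_inj by blast
  qed
  have "other_end j ` ?A = {w. w \<noteq> Up j \<and> {Up j, w} \<in> arc_chords T}"
  proof (intro set_eqI iffI)
    fix w assume "w \<in> other_end j ` ?A"
    then obtain \<alpha> where \<alpha>: "\<alpha> \<in> ?A" "w = other_end j \<alpha>" by blast
    then have "\<alpha> \<in> T" "ends \<alpha> = {Up j, w}" "w \<noteq> Up j" using ends[OF \<alpha>(1)] by simp_all
    then show "w \<in> {w. w \<noteq> Up j \<and> {Up j, w} \<in> arc_chords T}"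
      unfolding mem_arc_chords by blast
  next
    fix w assume "w \<in> {w. w \<noteq> Up j \<and> {Up j, w} \<in> arc_chords T}"
    then obtain \<alpha> where \<alpha>: "\<alpha> \<in> T" "ends \<alpha> = {Up j, w}" "w \<noteq> Up j"
      unfolding mem_arc_chords by blast
    then have A: "\<alpha> \<in> ?A" by simp
    then have "other_end j \<alpha> = w" using ends[OF A] \<alpha>(2,3) by (auto simp: doubleton_eq_iff)
    then show "w \<in> other_end j ` ?A" using A by blast
  qed
  then show ?thesis using card_image[OF inj] by simp
qed

lemma strip_poly_around:
  assumes "p < j" "j < r"
  shows "strip_poly p r s q
    = map Up [p..j-2] @ Up (j-1) # Up j # Up (j+1) # (map Up [j+2..r] @ map Lo [s..q])"
  using assms by (simp add: strip_poly_def upto_split3[of p "j - 1" r] upto_rec1[of j r]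
      upto_rec1[of "j + 1" r]) (simp add: add.commute)

lemma poly_nbrs_strip_poly:
  assumes T: "triangulation T" and pq: "Conn p q \<in> T" and rs: "Conn r s \<in> T"
    and j: "p < j" "j < r" and "s \<le> q"
  shows "poly_nbrs (arc_chords T) (strip_poly p r s q) (Up j)
    = {Up (j-1), Up (j+1)} \<union> {w. w \<noteq> Up j \<and> {Up j, w} \<in> arc_chords T}"
proof -
  let ?vs = "strip_poly p r s q"
  have edges: "{Up j, t} \<in> poly_edges ?vs \<longleftrightarrow> t = Up (j-1) \<or> t = Up (j+1)" for t
    unfolding strip_poly_around[OF j]
    by (rule poly_edges_middle) (auto simp: distinct_map inj_on_def)
  have inside: "w \<in> set ?vs" if chord: "{Up j, w} \<in> arc_chords T" for w
  proof -
    obtain \<alpha> where \<alpha>: "\<alpha> \<in> T" "ends \<alpha> = {Up j, w}"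
      using chord unfolding mem_arc_chords by blast
    have no_cross: "\<not> cross \<alpha> (Conn p q)" "\<not> cross \<alpha> (Conn r s)"
      using triangulation_no_cross[OF T \<alpha>(1)] pq rs by auto
    show ?thesis
    proof (cases \<alpha>)
      case (Conn v u)
      then have "v = j" "w = Lo u" using \<alpha>(2) by (auto simp: doubleton_eq_iff)
      then show ?thesis
        using conn_between[OF T pq rs, of v u] \<alpha>(1) Conn j \<open>s \<le> q\<close> by (auto simp: strip_poly_def)
    next
      case (UpA e f)
      then show ?thesis
        using \<alpha>(2) no_cross j triangulation_valid[OF T \<alpha>(1)]
        by (auto simp: strip_poly_def doubleton_eq_iff)
    next
      case (LoA e f)
      then show ?thesis using \<alpha>(2) by auto
    qed
  qed
  have "Up (j-1) \<in> set ?vs" "Up (j+1) \<in> set ?vs" using j by (auto simp: strip_poly_def)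
  then show ?thesis
    using edges inside unfolding poly_nbrs_def poly_adj_def by (auto simp: insert_commute)
qed

lemma card_poly_nbrs_strip_poly:
  assumes T: "triangulation T" and pq: "Conn p q \<in> T" and rs: "Conn r s \<in> T"
    and j: "p < j" "j < r" and "s \<le> q"
  shows "int (card (poly_nbrs (arc_chords T) (strip_poly p r s q) (Up j))) = gamma T j + 1"
proof -
  let ?W = "{w. w \<noteq> Up j \<and> {Up j, w} \<in> arc_chords T}"
  have "?W \<subseteq> poly_nbrs (arc_chords T) (strip_poly p r s q) (Up j)"
    using poly_nbrs_strip_poly[OF assms] by blast
  then have "finite ?W" by (rule finite_subset) (simp add: poly_nbrs_def)
  moreover have "Up (j-1) \<notin> ?W" "Up (j+1) \<notin> ?W"
    using upper.chord_iff_arc[OF T, of "j - 1" j] upper.chord_iff_arc[OF T, of j "j + 1"]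
      triangulation_valid[OF T, of "UpA (j - 1) j"] triangulation_valid[OF T, of "UpA j (j + 1)"]
    by (auto simp: insert_commute)
  ultimately have "card (poly_nbrs (arc_chords T) (strip_poly p r s q) (Up j)) = card ?W + 2"
    unfolding poly_nbrs_strip_poly[OF assms] by (simp add: card_insert_if)
  then show ?thesis using card_arcs_at[OF T, of j] by (simp add: gamma_def)
qed

section \<open>The frieze relations\<close>

lemma continuant_frieze_relations:
  fixes u l :: "int \<Rightarrow> int" and r s :: int
  defines "t \<equiv> \<lambda>i b. mat2_11 (quid_prod (map l [s..b-1]) * quid_prod (map u [i+1..r]))"
  assumes "s \<le> a" "j + 1 \<le> r"
  shows "t (j - 1) a + t (j + 1) a = u j * t j a
    \<and> u j = t (j - 1) a * t (j + 1) (a + 1) - t (j - 1) (a + 1) * t (j + 1) a"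
proof -
  define L where "L = quid_prod (map l [s..a-1])"
  define U where "U = quid_prod (map u [j+2..r])"
  have U1: "quid_prod (map u [j+1..r]) = U * quid (u (j+1))"
    unfolding U_def using quid_prod_map_upto_Cons[of "j + 1" r u] assms(3)
    by (simp add: add.commute)
  have U0: "quid_prod (map u [j..r]) = U * quid (u (j+1)) * quid (u j)"
    using assms(3) U1 by (simp add: quid_prod_map_upto_Cons)
  have L1: "quid_prod (map l [s..a]) = quid (l a) * L"
    unfolding L_def using quid_prod_map_upto_snoc[of s a l] assms(2) by simp
  let ?X = "L * U" and ?q1 = "quid (u (j+1))" and ?q0 = "quid (u j)"
  have entries: "t (j+1) a = mat2_11 ?X" "t j a = mat2_11 (?X * ?q1)"
    "t (j-1) a = mat2_11 (?X * ?q1 * ?q0)" "t (j+1) (a+1) = mat2_11 (quid (l a) * ?X)"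
    "t (j-1) (a+1) = mat2_11 (quid (l a) * ?X * ?q1 * ?q0)"
    using U1 U0 L1 by (simp_all add: t_def L_def U_def mult.assoc add.commute)
  have "mat2_det ?X = 1" by (simp add: L_def U_def mat2_det_mult mat2_det_quid_prod)
  then show ?thesis
    unfolding entries using continuant_recurrence continuant_exchange by simp
qed

lemma Phi_eq_continuant:
  assumes T: "triangulation T" and arcs: "Conn p q \<in> T" "Conn r s \<in> T"
    and ia: "p < i" "i < r" "s < a" "a < q"
  defines "c \<equiv> tri_count (arc_chords T) (strip_poly p r s q)"
  shows "Phi T i a = mat2_11 (quid_prod (map (c \<circ> Lo) [s..a-1]) * quid_prod (map (c \<circ> Up) [i+1..r]))"
  using Phi_eq_strip_entry[OF assms(1-7)] by (simp add: strip_entry_def quid_prod_append c_def)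

lemma tri_count_strip_poly_eq_gamma:
  assumes T: "triangulation T" and pq: "Conn p q \<in> T" and rs: "Conn r s \<in> T"
    and j: "p < j" "j < r" and "s \<le> q"
  shows "tri_count (arc_chords T) (strip_poly p r s q) (Up j) = gamma T j"
proof -
  have "conway_coxeter (arc_chords T) (strip_poly p r s q)"
    using conway_coxeter_strip_poly[OF T pq rs] assms(4-6) by simp
  moreover have "Up j \<in> set (strip_poly p r s q)" using j by (simp add: strip_poly_def)
  ultimately show ?thesis
    using conway_coxeter_tri_count card_poly_nbrs_strip_poly[OF assms] by fastforce
qed

theorem mainTheorem13:
  fixes T :: "arc set"
  assumes "triangulation T"
  shows "\<forall>j a. Phi T (j - 1) a + Phi T (j + 1) a = gamma T j * Phi T j a
           \<and> gamma T j = Phi T (j - 1) a * Phi T (j + 1) (a + 1) - Phi T (j - 1) (a + 1) * Phi T (j + 1) a"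
proof (intro allI)
  fix j a
  obtain p q where pq: "Conn p q \<in> T" "p < j - 1" "a + 1 < q"
    using assms unfolding triangulation_def by blast
  obtain r s where rs: "Conn r s \<in> T" "j + 1 < r" "s < a"
    using assms unfolding triangulation_def by blast
  let ?c = "tri_count (arc_chords T) (strip_poly p r s q)"
  have "Phi T i b = mat2_11 (quid_prod (map (?c \<circ> Lo) [s..b-1]) * quid_prod (map (?c \<circ> Up) [i+1..r]))"
    if "j - 1 \<le> i" "i \<le> j + 1" "a \<le> b" "b \<le> a + 1" for i b
    using Phi_eq_continuant[OF assms pq(1) rs(1)] pq rs that by simp
  moreover have "gamma T j = (?c \<circ> Up) j"
    using tri_count_strip_poly_eq_gamma[OF assms pq(1) rs(1)] pq rs by simp
  ultimately show "Phi T (j - 1) a + Phi T (j + 1) a = gamma T j * Phi T j a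
           \<and> gamma T j = Phi T (j - 1) a * Phi T (j + 1) (a + 1) - Phi T (j - 1) (a + 1) * Phi T (j + 1) a"
    using continuant_frieze_relations[of s a j r "?c \<circ> Lo" "?c \<circ> Up"] rs by simp
qed

end
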